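(* Let $f_1,\dots,f_n\colon\mathbb{R}\to\mathbb{R}$ be differentiable and Lipschitz continuous, each having only finitely many zeros, with $f_i'(q)\neq 0$ at every zero $q$ of $f_i$. Let $\mathcal{Z}=\bigcap_{i\in[n]}\{z: f_i(z)<0\}$ and let $z^{\mathrm{obs}}\in\mathcal{Z}$. Fix $\varepsilon_{\max}>0$. For $\varepsilon_{\min}\in(0,\varepsilon_{\max}]$ and $S>0$, let $p_{\mathrm{grid}}=p_{\mathrm{grid}}(\varepsilon_{\min},S)$ be the output of the adaptive grid procedure described in the context, using the grid width $d(\cdot)$ defined there. Then there exist constants $C>0$, $\varepsilon_0>0$, $S_0>0$ (independent of $\varepsilon_{\min}$ and $S$) such that for all $\varepsilon_{\min}\in(0,\varepsilon_0)$ and all $S>S_0$, $$|p_{\mathrm{selective}}-p_{\mathrm{grid}}|\le C\bigl(\varepsilon_{\min}+\exp(-S^2/2)\bigr),$$ i.e. $|p_{\mathrm{selective}}-p_{\mathrm{grid}}|=O(\varepsilon_{\min}+\exp(-S^2/2))$ as $\varepsilon_{\min}\to0$, $S\to\infty$.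
   Context: Let $W\sim\mathcal{N}(0,1)$. The selective $p$-value is $p_{\mathrm{selective}}=\mathbb{P}(|W|>|z^{\mathrm{obs}}|\mid W\in\mathcal{Z})$. For each $z\in\mathbb{R}$ and $i\in[n]$, let $L_i(z)>0$ denote a Lipschitz constant of $f_i$ on $[z-\varepsilon_{\max},z+\varepsilon_{\max}]$, and define the grid width $d(z)=\min_{i:\,f_i(z)<0}|f_i(z)|/L_i(z)$ if $z\in\mathcal{Z}$, and $d(z)=\max_{i:\,f_i(z)\ge0}|f_i(z)|/L_i(z)$ if $z\notin\mathcal{Z}$. Adaptive grid procedure: set $z_0=-S$ and, while $z_j<S$, set $z_{j+1}=z_j+\min(\varepsilon_{\max},\max(d(z_j),\varepsilon_{\min}))$. Let $d^{\mathrm{obs}}=\min(\varepsilon_{\max},d(z^{\mathrm{obs}}))$, $J(z^{\mathrm{obs}})=[z^{\mathrm{obs}}-d^{\mathrm{obs}},z^{\mathrm{obs}}+d^{\mathrm{obs}}]$, $\mathcal{Z}^{\mathrm{grid}}=\bigcup_{j:\,z_j\in\mathcal{Z}}[z_j,z_{j+1}]\cup J(z^{\mathrm{obs}})$ (union over the generated grid points), and output $p_{\mathrm{grid}}=\mathbb{P}(|W|>|z^{\mathrm{obs}}|\mid W\in\mathcal{Z}^{\mathrm{grid}})$. *)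

theory Defs
  imports "HOL-Analysis.Analysis" "HOL-Probability.Probability"
begin

definition gauss :: "real measure" where
  "gauss = density lborel std_normal_density"

definition cond_prob :: "real \<Rightarrow> real set \<Rightarrow> real" where
  "cond_prob t A = measure gauss ({w. \<bar>w\<bar> > t} \<inter> A) / measure gauss A"

definition feas :: "(nat \<Rightarrow> real \<Rightarrow> real) \<Rightarrow> nat \<Rightarrow> real set" where
  "feas f n = {z. \<forall>i<n. f i z < 0}"

definition gridw :: "(nat \<Rightarrow> real \<Rightarrow> real) \<Rightarrow> nat \<Rightarrow> (nat \<Rightarrow> real \<Rightarrow> real) \<Rightarrow> real \<Rightarrow> real" where
  "gridw f n L z =
     (if z \<in> feas f n then Min {\<bar>f i z\<bar> / L i z | i. i < n \<and> f i z < 0}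
      else Max {\<bar>f i z\<bar> / L i z | i. i < n \<and> f i z \<ge> 0})"

text \<open>Grid points z_j: z_0 = -S, z_(j+1) = z_j + min emax (max (d z_j) emin).
  The procedure generates z_(j+1) exactly when z_j < S.\<close>
definition grid_pt :: "(nat \<Rightarrow> real \<Rightarrow> real) \<Rightarrow> nat \<Rightarrow> (nat \<Rightarrow> real \<Rightarrow> real) \<Rightarrow> real \<Rightarrow> real \<Rightarrow> real \<Rightarrow> nat \<Rightarrow> real" where
  "grid_pt f n L emax emin S j =
     ((\<lambda>z. z + min emax (max (gridw f n L z) emin)) ^^ j) (- S)"

definition Zgrid :: "(nat \<Rightarrow> real \<Rightarrow> real) \<Rightarrow> nat \<Rightarrow> (nat \<Rightarrow> real \<Rightarrow> real) \<Rightarrow> real \<Rightarrow> real \<Rightarrow> real \<Rightarrow> real \<Rightarrow> real set" where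
  "Zgrid f n L emax emin S zobs =
     (\<Union>j\<in>{j. grid_pt f n L emax emin S j < S \<and> grid_pt f n L emax emin S j \<in> feas f n}.
        {grid_pt f n L emax emin S j .. grid_pt f n L emax emin S (Suc j)})
     \<union> (let dobs = min emax (gridw f n L zobs) in {zobs - dobs .. zobs + dobs})"

definition p_grid :: "(nat \<Rightarrow> real \<Rightarrow> real) \<Rightarrow> nat \<Rightarrow> (nat \<Rightarrow> real \<Rightarrow> real) \<Rightarrow> real \<Rightarrow> real \<Rightarrow> real \<Rightarrow> real \<Rightarrow> real" where
  "p_grid f n L emax emin S zobs = cond_prob \<bar>zobs\<bar> (Zgrid f n L emax emin S zobs)"

definition p_selective :: "(nat \<Rightarrow> real \<Rightarrow> real) \<Rightarrow> nat \<Rightarrow> real \<Rightarrow> real" where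
  "p_selective f n zobs = cond_prob \<bar>zobs\<bar> (feas f n)"

end

theory Submission
  imports Defs "HOL-Real_Asymp.Real_Asymp"
begin

text \<open>Both p-values are ratios of Gaussian measures, so it suffices to control the symmetric
  difference of \<open>Z\<close> and \<open>Z\<^sup>g\<^sup>r\<^sup>i\<^sup>d\<close>. Whenever a grid step is longer than
  \<open>\<epsilon>\<^sub>m\<^sub>i\<^sub>n\<close>, it is bounded by the Lipschitz certificate \<open>d\<close>, so no constraint changes sign
  strictly inside it; a step of length \<open>\<epsilon>\<^sub>m\<^sub>i\<^sub>n\<close> that crosses the boundary of \<open>Z\<close> contains a
  zero of some \<open>f\<^sub>i\<close> by the intermediate value theorem. Hence inside \<open>[-S, S]\<close> the two sets
  differ only within distance \<open>\<epsilon>\<^sub>m\<^sub>i\<^sub>n\<close> of the finitely many zeros, and the symmetric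
  difference has Gaussian measure at most \<open>2N\<epsilon>\<^sub>m\<^sub>i\<^sub>n + 2exp(-S\<^sup>2/2)\<close>. Differentiability
  enters only through continuity.\<close>

interpretation gauss: prob_space gauss
  unfolding gauss_def by (intro prob_space_normal_density) simp

lemma sets_gauss [simp, measurable_cong]: "sets gauss = sets borel"
  unfolding gauss_def by simp

lemma emeasure_gauss:
  "A \<in> sets borel \<Longrightarrow> emeasure gauss A = (\<integral>\<^sup>+x. ennreal (std_normal_density x) * indicator A x \<partial>lborel)"
  unfolding gauss_def by (subst emeasure_density) auto

lemma std_normal_density_le_1: "std_normal_density x \<le> 1"
proof -
  have "1 / sqrt (2 * pi) \<le> 1" using pi_gt3 by (simp add: divide_le_eq)
  then show ?thesis
    unfolding std_normal_density_def by (intro mult_le_one) auto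
qed

lemma measure_gauss_atLeastAtMost_le: "a \<le> b \<Longrightarrow> measure gauss {a..b} \<le> b - a"
proof -
  assume ab: "a \<le> b"
  have "emeasure gauss {a..b} = (\<integral>\<^sup>+x. ennreal (std_normal_density x) * indicator {a..b} x \<partial>lborel)"
    by (rule emeasure_gauss) auto
  also have "\<dots> \<le> (\<integral>\<^sup>+x. indicator {a..b} x \<partial>lborel)"
    using std_normal_density_le_1
    by (intro nn_integral_mono) (auto split: split_indicator simp: ennreal_le_1)
  also have "\<dots> = ennreal (b - a)" using ab by simp
  finally show ?thesis using ab by (simp add: gauss.emeasure_eq_measure ennreal_le_iff)
qed

lemma measure_gauss_atLeastAtMost_pos:
  assumes ab: "a < b" shows "measure gauss {a..b} > 0"
proof -
  define k where "k = (1 / sqrt (2 * pi)) * exp (- (max \<bar>a\<bar> \<bar>b\<bar>)\<^sup>2 / 2)"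
  have k: "k \<le> std_normal_density x" if "x \<in> {a..b}" for x
  proof -
    have "x\<^sup>2 \<le> (max \<bar>a\<bar> \<bar>b\<bar>)\<^sup>2"
      using that by (intro power2_le_iff_abs_le[THEN iffD2]) auto
    then show ?thesis unfolding k_def std_normal_density_def by (intro mult_left_mono) auto
  qed
  have k0: "k > 0" by (simp add: k_def)
  have "ennreal (k * (b - a)) = (\<integral>\<^sup>+x. ennreal k * indicator {a..b} x \<partial>lborel)"
    using ab k0 by (simp add: nn_integral_cmult ennreal_mult)
  also have "\<dots> \<le> (\<integral>\<^sup>+x. ennreal (std_normal_density x) * indicator {a..b} x \<partial>lborel)"
    using k by (intro nn_integral_mono) (auto split: split_indicator intro: ennreal_leI)
  also have "\<dots> = emeasure gauss {a..b}" by (rule emeasure_gauss[symmetric]) auto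
  finally have "k * (b - a) \<le> measure gauss {a..b}"
    by (simp add: gauss.emeasure_eq_measure ennreal_le_iff)
  moreover have "k * (b - a) > 0" using ab k0 by simp
  ultimately show ?thesis by linarith
qed

lemma measure_gauss_open_pos:
  assumes "open U" "z \<in> U" shows "measure gauss U > 0"
proof -
  obtain e where e: "e > 0" "ball z e \<subseteq> U" using assms open_contains_ball by blast
  have "{z - e/2 .. z + e/2} \<subseteq> U"
    using e by (auto simp: dist_real_def subset_iff abs_le_iff)
  then have "measure gauss {z - e/2 .. z + e/2} \<le> measure gauss U"
    using assms by (intro gauss.finite_measure_mono) auto
  moreover have "measure gauss {z - e/2 .. z + e/2} > 0"
    using e by (intro measure_gauss_atLeastAtMost_pos) auto
  ultimately show ?thesis by linarith
qed

lemma measure_gauss_abs_ge_le: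
  assumes S: "S \<ge> 1"
  shows "measure gauss {w. S \<le> \<bar>w\<bar>} \<le> 2 * exp (- (S\<^sup>2) / 2)"
proof -
  define c where "c = 1 / sqrt (2 * pi)"
  have c0: "0 < c" and c1: "c \<le> 1" using pi_gt3 by (auto simp: c_def divide_le_eq)
  \<comment> \<open>On the tail \<open>x \<ge> S \<ge> 1\<close> the density is dominated by \<open>x \<phi>(x)\<close>, which has an explicit primitive.\<close>
  define g where "g x = ennreal (x * (c * exp (- x\<^sup>2 / 2))) * indicator {S..} x" for x
  have gm[measurable]: "g \<in> borel_measurable borel" unfolding g_def by measurable
  have dom: "ennreal (std_normal_density x) * indicator {w. S \<le> \<bar>w\<bar>} x \<le> g x + g (0 + (-1) * x)"
    for x :: real
  proof (cases "S \<le> \<bar>x\<bar>")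
    case True
    have "1 * (c * exp (- x\<^sup>2 / 2)) \<le> \<bar>x\<bar> * (c * exp (- x\<^sup>2 / 2))"
      using S True c0 by (intro mult_right_mono) auto
    then show ?thesis
      using True S
      by (cases "x \<ge> 0")
        (auto simp: g_def std_normal_density_def c_def intro!: add_increasing add_increasing2 ennreal_leI)
  qed simp
  have "emeasure gauss {w. S \<le> \<bar>w\<bar>}
      = (\<integral>\<^sup>+x. ennreal (std_normal_density x) * indicator {w. S \<le> \<bar>w\<bar>} x \<partial>lborel)"
    by (rule emeasure_gauss) measurable
  also have "\<dots> \<le> (\<integral>\<^sup>+x. g x + g (0 + (-1) * x) \<partial>lborel)"
    using dom by (rule nn_integral_mono)
  also have "\<dots> = (\<integral>\<^sup>+x. g x \<partial>lborel) + (\<integral>\<^sup>+x. g (0 + (-1) * x) \<partial>lborel)"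
    by (rule nn_integral_add) auto
  also have "(\<integral>\<^sup>+x. g (0 + (-1) * x) \<partial>lborel) = (\<integral>\<^sup>+x. g x \<partial>lborel)"
    using nn_integral_real_affine[OF gm, of "-1" 0] by simp
  also have "(\<integral>\<^sup>+x. g x \<partial>lborel) = ennreal (0 - (- (c * exp (- S\<^sup>2 / 2))))"
    unfolding g_def
  proof (rule nn_integral_FTC_atLeast)
    show "(\<lambda>x. x * (c * exp (- x\<^sup>2 / 2))) \<in> borel_measurable borel" by measurable
    show "((\<lambda>x. - (c * exp (- x\<^sup>2 / 2))) has_real_derivative x * (c * exp (- x\<^sup>2 / 2))) (at x)"
      for x by (auto intro!: derivative_eq_intros simp: field_simps)
    show "S \<le> x \<Longrightarrow> 0 \<le> x * (c * exp (- x\<^sup>2 / 2))" for x using S c0 by simp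
    show "((\<lambda>x::real. - (c * exp (- x\<^sup>2 / 2))) \<longlongrightarrow> 0) at_top" by real_asymp
  qed
  finally have "measure gauss {w. S \<le> \<bar>w\<bar>} \<le> 2 * (c * exp (- S\<^sup>2 / 2))"
    using c0 by (simp add: gauss.emeasure_eq_measure ennreal_plus[symmetric] ennreal_le_iff)
  also have "\<dots> \<le> 2 * exp (- S\<^sup>2 / 2)" using c1 by simp
  finally show ?thesis by simp
qed

lemma measure_gauss_UN_atLeastAtMost_le:
  assumes "finite Q" "0 \<le> e"
  shows "measure gauss (\<Union>q\<in>Q. {q - e .. q + e}) \<le> real (card Q) * (2 * e)"
proof -
  have "measure gauss (\<Union>q\<in>Q. {q - e .. q + e}) \<le> (\<Sum>q\<in>Q. measure gauss {q - e .. q + e})"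
    using assms by (intro measure_UNION_le) auto
  also have "\<dots> \<le> real (card Q) * (2 * e)"
    using assms measure_gauss_atLeastAtMost_le[of "q - e" "q + e" for q]
    by (intro sum_bounded_above) auto
  finally show ?thesis .
qed

lemma measure_gauss_near_finite_or_tail_le:
  assumes "finite Q" "0 \<le> e" "1 \<le> S"
  shows "2 * measure gauss ((\<Union>q\<in>Q. {q - e .. q + e}) \<union> {w. S \<le> \<bar>w\<bar>})
           \<le> (4 * real (card Q) + 4) * (e + exp (- (S\<^sup>2) / 2))"
proof -
  let ?k = "real (card Q)" and ?x = "exp (- (S\<^sup>2) / 2)"
  have "measure gauss ((\<Union>q\<in>Q. {q - e .. q + e}) \<union> {w. S \<le> \<bar>w\<bar>})
      \<le> measure gauss (\<Union>q\<in>Q. {q - e .. q + e}) + measure gauss {w. S \<le> \<bar>w\<bar>}"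
    using assms(1) by (intro measure_Un_le) auto
  also have "\<dots> \<le> ?k * (2 * e) + 2 * ?x"
    using assms measure_gauss_UN_atLeastAtMost_le measure_gauss_abs_ge_le by (intro add_mono) auto
  finally have bound: "measure gauss ((\<Union>q\<in>Q. {q - e .. q + e}) \<union> {w. S \<le> \<bar>w\<bar>}) \<le> ?k * (2 * e) + 2 * ?x" .
  have "(4 * ?k + 4) * (e + ?x) = 2 * (?k * (2 * e) + 2 * ?x) + 4 * e + 4 * (?k * ?x)"
    by (simp add: algebra_simps)
  moreover have "0 \<le> ?k * ?x" by simp
  ultimately show ?thesis using bound assms(2) by (smt (verit))
qed

lemma abs_ratio_diff_le:
  fixes a1 a2 b1 b2 m :: real
  assumes "b1 > 0" "0 \<le> a1" "a1 \<le> b1" "0 \<le> a2" "a2 \<le> b2"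
    and "\<bar>a1 - a2\<bar> \<le> m" "\<bar>b1 - b2\<bar> \<le> m"
  shows "\<bar>a1 / b1 - a2 / b2\<bar> \<le> 2 * m / b1"
proof (cases "b2 = 0")
  case True
  then have "b1 \<le> m" "a2 = 0" using assms by auto
  then show ?thesis using assms by (simp add: le_divide_eq)
next
  case False
  then have b2: "b2 > 0" using assms by simp
  have "a1 / b1 - a2 / b2 = (a1 - a2) / b1 + (a2 / b2) * ((b2 - b1) / b1)"
    using b2 assms(1) by (simp add: field_simps)
  also have "\<bar>\<dots>\<bar> \<le> \<bar>(a1 - a2) / b1\<bar> + \<bar>a2 / b2\<bar> * \<bar>(b2 - b1) / b1\<bar>"
    by (simp add: abs_triangle_ineq[THEN order_trans] abs_mult)
  also have "\<dots> \<le> m / b1 + 1 * (m / b1)"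
    using assms b2
    by (intro add_mono mult_mono) (auto simp: abs_minus_commute intro!: divide_right_mono)
  finally show ?thesis by simp
qed

lemma (in finite_measure) abs_measure_diff_le:
  assumes "A \<in> sets M" "B \<in> sets M" "D \<in> sets M" "A - B \<subseteq> D" "B - A \<subseteq> D"
  shows "\<bar>measure M A - measure M B\<bar> \<le> measure M D"
proof -
  have "measure M X \<le> measure M Y + measure M D"
    if "X \<in> sets M" "Y \<in> sets M" "X - Y \<subseteq> D" for X Y
  proof -
    have "measure M X \<le> measure M (Y \<union> D)"
      using that assms by (intro finite_measure_mono) auto
    also have "\<dots> \<le> measure M Y + measure M D"
      using that assms by (intro measure_Un_le) auto
    finally show ?thesis .
  qed
  from this[of A B] this[of B A] show ?thesis using assms by linarith
qed

lemma (in finite_measure) abs_conditional_measure_diff_le: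
  assumes "T \<in> sets M" "A \<in> sets M" "B \<in> sets M" "D \<in> sets M"
    and "A - B \<subseteq> D" "B - A \<subseteq> D" "measure M A > 0"
  shows "\<bar>measure M (T \<inter> A) / measure M A - measure M (T \<inter> B) / measure M B\<bar>
           \<le> 2 * measure M D / measure M A"
  using assms
  by (intro abs_ratio_diff_le abs_measure_diff_le finite_measure_mono) auto

lemma abs_cond_prob_diff_le:
  assumes "A \<in> sets borel" "B \<in> sets borel" "D \<in> sets borel"
    and "A - B \<subseteq> D" "B - A \<subseteq> D" "measure gauss A > 0"
  shows "\<bar>cond_prob t A - cond_prob t B\<bar> \<le> 2 * measure gauss D / measure gauss A"
  unfolding cond_prob_def using assms
  by (intro gauss.abs_conditional_measure_diff_le) auto

definition zeros :: "(nat \<Rightarrow> real \<Rightarrow> real) \<Rightarrow> nat \<Rightarrow> real set" where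
  "zeros f n = {q. \<exists>i<n. f i q = 0}"

definition grid_step ::
  "(nat \<Rightarrow> real \<Rightarrow> real) \<Rightarrow> nat \<Rightarrow> (nat \<Rightarrow> real \<Rightarrow> real) \<Rightarrow> real \<Rightarrow> real \<Rightarrow> real \<Rightarrow> real" where
  "grid_step f n L emax emin z = min emax (max (gridw f n L z) emin)"

lemma grid_pt_0 [simp]: "grid_pt f n L emax emin S 0 = - S"
  by (simp add: grid_pt_def)

lemma grid_pt_Suc:
  "grid_pt f n L emax emin S (Suc j) =
     grid_pt f n L emax emin S j + grid_step f n L emax emin (grid_pt f n L emax emin S j)"
  by (simp add: grid_pt_def grid_step_def)

lemma open_feas:
  assumes "\<forall>i<n. \<forall>z. isCont (f i) z" shows "open (feas f n)"
proof -
  have "feas f n = (\<Inter>i\<in>{..<n}. {z. f i z < 0})" by (auto simp: feas_def)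
  then show ?thesis
    using assms by (auto intro!: open_INT open_Collect_less continuous_at_imp_continuous_on)
qed

lemma gridw_le_if_feas:
  assumes "z \<in> feas f n" "i < n"
  shows "gridw f n L z \<le> \<bar>f i z\<bar> / L i z"
  using assms unfolding gridw_def feas_def
  by (auto intro!: Min_le finite_image_set)

lemma gridw_if_not_feas:
  assumes "z \<notin> feas f n"
  obtains i where "i < n" "f i z \<ge> 0" "gridw f n L z = \<bar>f i z\<bar> / L i z"
proof -
  let ?A = "{\<bar>f i z\<bar> / L i z | i. i < n \<and> f i z \<ge> 0}"
  obtain i where "i < n" "f i z \<ge> 0" using assms by (auto simp: feas_def not_less)
  then have "?A \<noteq> {}" by blast
  then have "Max ?A \<in> ?A" by (intro Max_in finite_image_set) auto
  then show ?thesis using assms that unfolding gridw_def by auto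
qed

lemma in_zeros_if_nonpos_not_feas:
  "(\<forall>i<n. f i w \<le> 0) \<Longrightarrow> w \<notin> feas f n \<Longrightarrow> w \<in> zeros f n"
  by (force simp: feas_def zeros_def)

lemma zero_between_feas_not_feas:
  assumes cont: "\<forall>i<n. \<forall>z. isCont (f i) z"
    and "z \<in> feas f n" "w \<notin> feas f n"
  obtains q where "q \<in> zeros f n" "\<bar>w - q\<bar> \<le> \<bar>w - z\<bar>" "\<bar>z - q\<bar> \<le> \<bar>w - z\<bar>"
proof -
  obtain i where i: "i < n" "f i w \<ge> 0" "f i z < 0"
    using assms by (auto simp: feas_def not_less)
  then have c: "\<forall>x. isCont (f i) x" using cont by auto
  consider "z \<le> w" | "w \<le> z" by linarith
  then show ?thesis
  proof cases
    case 1
    then obtain q where "z \<le> q" "q \<le> w" "f i q = 0"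
      using IVT[of "f i" z 0 w] i c by auto
    then show ?thesis using i by (intro that[of q]) (auto simp: zeros_def)
  next
    case 2
    then obtain q where "w \<le> q" "q \<le> z" "f i q = 0"
      using IVT2[of "f i" z 0 w] i c by auto
    then show ?thesis using i by (intro that[of q]) (auto simp: zeros_def)
  qed
qed

lemma ex_bracketing_index:
  fixes x :: "nat \<Rightarrow> real"
  assumes "x 0 \<le> w" "e > 0" "\<And>j. x j + e \<le> x (Suc j)"
  obtains j where "x j \<le> w" "w < x (Suc j)"
proof -
  have grow: "x 0 + real j * e \<le> x j" for j
  proof (induction j)
    case (Suc j) then show ?case using assms(3)[of j] by (simp add: algebra_simps)
  qed simp
  obtain m :: nat where "(w - x 0) / e < real m" using reals_Archimedean2 by blast
  then have "w < x m" using grow[of m] assms(2) by (simp add: divide_less_eq algebra_simps)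
  define k where "k = (LEAST k. w < x k)"
  have k: "w < x k" unfolding k_def by (rule LeastI) fact
  then have "k \<noteq> 0" using assms(1) by (intro notI) simp
  then obtain j where j: "k = Suc j" using not0_implies_Suc by blast
  have "\<not> w < x j" using not_less_Least[of j "\<lambda>k. w < x k"] j by (simp add: k_def)
  then show ?thesis using that[of j] k j by simp
qed

context
  fixes f L :: "nat \<Rightarrow> real \<Rightarrow> real" and n :: nat and emax :: real
  assumes Lconst: "\<forall>i<n. \<forall>z. L i z > 0 \<and> (L i z)-lipschitz_on {z - emax .. z + emax} (f i)"
begin

lemma abs_diff_le_within_lipschitz_radius:
  assumes "i < n" "\<bar>w - z\<bar> \<le> emax" "\<bar>w - z\<bar> \<le> \<bar>f i z\<bar> / L i z"
  shows "\<bar>f i w - f i z\<bar> \<le> \<bar>f i z\<bar>"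
proof -
  have L: "L i z > 0" and lip: "(L i z)-lipschitz_on {z - emax .. z + emax} (f i)"
    using Lconst assms(1) by auto
  have "dist (f i w) (f i z) \<le> L i z * dist w z"
    using assms(2) by (intro lipschitz_onD[OF lip]) (auto simp: abs_le_iff)
  also have "\<dots> \<le> L i z * (\<bar>f i z\<bar> / L i z)"
    using assms(3) L by (intro mult_left_mono) (auto simp: dist_real_def)
  finally show ?thesis using L by (simp add: dist_real_def)
qed

lemma nonpos_within_gridw_of_feas:
  assumes "z \<in> feas f n" "\<bar>w - z\<bar> \<le> emax" "\<bar>w - z\<bar> \<le> gridw f n L z" "i < n"
  shows "f i w \<le> 0"
proof -
  have "\<bar>f i w - f i z\<bar> \<le> \<bar>f i z\<bar>"
    using assms gridw_le_if_feas[OF assms(1,4), of L] by (intro abs_diff_le_within_lipschitz_radius) auto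
  moreover have "f i z < 0" using assms by (simp add: feas_def)
  ultimately show ?thesis by linarith
qed

lemma not_feas_within_gridw_of_not_feas:
  assumes "z \<notin> feas f n" "\<bar>w - z\<bar> \<le> emax" "\<bar>w - z\<bar> \<le> gridw f n L z"
  shows "w \<notin> feas f n"
proof -
  obtain i where i: "i < n" "f i z \<ge> 0" "gridw f n L z = \<bar>f i z\<bar> / L i z"
    using gridw_if_not_feas[OF assms(1)] .
  then have "\<bar>f i w - f i z\<bar> \<le> \<bar>f i z\<bar>"
    using assms by (intro abs_diff_le_within_lipschitz_radius) auto
  then have "f i w \<ge> 0" using i by linarith
  then show ?thesis using i by (auto simp: feas_def)
qed

context
  assumes cont: "\<forall>i<n. \<forall>z. isCont (f i) z"
begin

lemma near_zero_if_grid_step_crosses: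
  assumes "0 \<le> emin" "\<bar>w - z\<bar> \<le> grid_step f n L emax emin z"
    and "z \<in> feas f n \<longleftrightarrow> w \<notin> feas f n"
  obtains q where "q \<in> zeros f n" "\<bar>w - q\<bar> \<le> emin"
proof (cases "grid_step f n L emax emin z \<le> emin")
  case True
  obtain q where "q \<in> zeros f n" "\<bar>w - q\<bar> \<le> \<bar>w - z\<bar>"
  proof (cases "z \<in> feas f n")
    case True
    then show ?thesis using zero_between_feas_not_feas[OF cont True] assms(3) that by blast
  next
    case False
    then show ?thesis
      using zero_between_feas_not_feas[OF cont, of w z] assms(3) that by (auto simp: abs_minus_commute)
  qed
  moreover have "\<bar>w - z\<bar> \<le> emin" using True assms(2) by linarith
  ultimately show ?thesis using that by (meson order_trans)
next
  case False
  then have near: "\<bar>w - z\<bar> \<le> emax" "\<bar>w - z\<bar> \<le> gridw f n L z"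
    using assms(2) by (auto simp: grid_step_def)
  show ?thesis
  proof (cases "z \<in> feas f n")
    case True
    then have "w \<in> zeros f n"
      using nonpos_within_gridw_of_feas[OF True near] assms(3) by (intro in_zeros_if_nonpos_not_feas) auto
    then show ?thesis using that[of w] assms(1) by simp
  next
    case False
    then show ?thesis using not_feas_within_gridw_of_not_feas[OF False near] assms(3) by blast
  qed
qed

lemma Zgrid_diff_feas_subset:
  assumes "0 \<le> emin" "zobs \<in> feas f n"
  shows "Zgrid f n L emax emin S zobs - feas f n \<subseteq> (\<Union>q\<in>zeros f n. {q - emin .. q + emin})"
proof
  let ?g = "grid_pt f n L emax emin S"
  fix w assume w: "w \<in> Zgrid f n L emax emin S zobs - feas f n"
  obtain q where "q \<in> zeros f n" "\<bar>w - q\<bar> \<le> emin"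
  proof -
    have "w \<in> (\<Union>j\<in>{j. ?g j < S \<and> ?g j \<in> feas f n}. {?g j .. ?g (Suc j)})
        \<or> w \<in> {zobs - min emax (gridw f n L zobs) .. zobs + min emax (gridw f n L zobs)}"
      using w unfolding Zgrid_def Let_def by blast
    then consider j where "?g j \<in> feas f n" "?g j \<le> w" "w \<le> ?g (Suc j)"
      | "\<bar>w - zobs\<bar> \<le> emax" "\<bar>w - zobs\<bar> \<le> gridw f n L zobs"
      by (auto simp: abs_le_iff min_def split: if_splits)
    then show ?thesis
    proof cases
      case (1 j)
      then have "\<bar>w - ?g j\<bar> \<le> grid_step f n L emax emin (?g j)" by (simp add: grid_pt_Suc)
      then show ?thesis using near_zero_if_grid_step_crosses[OF assms(1)] 1 w that by blast
    next
      case 2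
      then have "w \<in> zeros f n"
        using nonpos_within_gridw_of_feas[OF assms(2)] w by (intro in_zeros_if_nonpos_not_feas) auto
      then show ?thesis using that[of w] assms(1) by simp
    qed
  qed
  then show "w \<in> (\<Union>q\<in>zeros f n. {q - emin .. q + emin})"
    by (intro UN_I[of q]) (auto simp: abs_le_iff)
qed

lemma feas_diff_Zgrid_subset:
  assumes "0 < emin" "emin \<le> emax"
  shows "feas f n - Zgrid f n L emax emin S zobs
           \<subseteq> (\<Union>q\<in>zeros f n. {q - emin .. q + emin}) \<union> {w. S \<le> \<bar>w\<bar>}"
proof
  let ?g = "grid_pt f n L emax emin S"
  fix w assume w: "w \<in> feas f n - Zgrid f n L emax emin S zobs"
  show "w \<in> (\<Union>q\<in>zeros f n. {q - emin .. q + emin}) \<union> {w. S \<le> \<bar>w\<bar>}"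
  proof (cases "S \<le> \<bar>w\<bar>")
    case False
    have "?g 0 \<le> w" using False by simp
    moreover have "?g j + emin \<le> ?g (Suc j)" for j using assms by (simp add: grid_pt_Suc grid_step_def)
    ultimately obtain j where j: "?g j \<le> w" "w < ?g (Suc j)"
      using ex_bracketing_index[of ?g w emin] assms(1) by blast
    have "?g j \<notin> feas f n"
    proof
      assume "?g j \<in> feas f n"
      moreover have "?g j < S" using j False by simp
      ultimately have "w \<in> (\<Union>j\<in>{j. ?g j < S \<and> ?g j \<in> feas f n}. {?g j .. ?g (Suc j)})"
        using j by auto
      then show False using w unfolding Zgrid_def by blast
    qed
    moreover have "\<bar>w - ?g j\<bar> \<le> grid_step f n L emax emin (?g j)" using j by (simp add: grid_pt_Suc)
    ultimately obtain q where "q \<in> zeros f n" "\<bar>w - q\<bar> \<le> emin"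
      using near_zero_if_grid_step_crosses[of emin w "?g j"] assms(1) w by auto
    then show ?thesis by (intro UnI1 UN_I[of q]) (auto simp: abs_le_iff)
  qed simp
qed

lemma abs_p_selective_p_grid_le:
  assumes zobs: "zobs \<in> feas f n" and fin: "finite (zeros f n)"
    and emin: "0 < emin" "emin \<le> emax" and S: "1 \<le> S"
  shows "\<bar>p_selective f n zobs - p_grid f n L emax emin S zobs\<bar>
           \<le> (4 * real (card (zeros f n)) + 4) / measure gauss (feas f n) * (emin + exp (- (S\<^sup>2) / 2))"
proof -
  define N where "N = (\<Union>q\<in>zeros f n. {q - emin .. q + emin})"
  define T where "T = {w::real. S \<le> \<bar>w\<bar>}"
  have "T \<in> sets borel" unfolding T_def by measurable
  then have NT: "N \<union> T \<in> sets borel" using fin unfolding N_def by (intro sets.Un) auto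
  have Z: "feas f n \<in> sets borel" using open_feas[OF cont] by auto
  have G: "Zgrid f n L emax emin S zobs \<in> sets borel"
    unfolding Zgrid_def Let_def by (intro sets.Un sets.countable_UN') auto
  have Z_pos: "measure gauss (feas f n) > 0" by (rule measure_gauss_open_pos[OF open_feas[OF cont] zobs])
  have feas_Zgrid: "feas f n - Zgrid f n L emax emin S zobs \<subseteq> N \<union> T"
    using feas_diff_Zgrid_subset[OF emin] unfolding N_def T_def .
  have Zgrid_feas: "Zgrid f n L emax emin S zobs - feas f n \<subseteq> N \<union> T"
    using Zgrid_diff_feas_subset[OF less_imp_le[OF emin(1)] zobs, of S] unfolding N_def
    by (rule subset_trans) (rule Un_upper1)
  have "\<bar>p_selective f n zobs - p_grid f n L emax emin S zobs\<bar>
      \<le> 2 * measure gauss (N \<union> T) / measure gauss (feas f n)"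
    unfolding p_selective_def p_grid_def
    using abs_cond_prob_diff_le[OF Z G NT feas_Zgrid Zgrid_feas Z_pos] .
  also have "\<dots> \<le> (4 * real (card (zeros f n)) + 4) * (emin + exp (- (S\<^sup>2) / 2)) / measure gauss (feas f n)"
    using measure_gauss_near_finite_or_tail_le[OF fin less_imp_le[OF emin(1)] S] Z_pos
    unfolding N_def T_def by (intro divide_right_mono) auto
  finally show ?thesis by simp
qed

end

end

theorem theorem2:
  fixes f L :: "nat \<Rightarrow> real \<Rightarrow> real" and n :: nat and zobs emax :: real
  assumes n_pos: "n \<ge> 1"
    and diff: "\<forall>i<n. \<forall>z. f i differentiable (at z)"
    and lip: "\<forall>i<n. \<exists>K. K-lipschitz_on UNIV (f i)"
    and fin_zeros: "\<forall>i<n. finite {z. f i z = 0}"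
    and nondeg: "\<forall>i<n. \<forall>q. f i q = 0 \<longrightarrow> deriv (f i) q \<noteq> 0"
    and zobs: "zobs \<in> feas f n"
    and emax: "emax > 0"
    and Lconst: "\<forall>i<n. \<forall>z. L i z > 0 \<and> (L i z)-lipschitz_on {z - emax .. z + emax} (f i)"
  shows "\<exists>C>0. \<exists>e0>0. \<exists>S0>0. \<forall>emin S. 0 < emin \<and> emin \<le> emax \<and> emin < e0 \<and> S > S0 \<longrightarrow>
           \<bar>p_selective f n zobs - p_grid f n L emax emin S zobs\<bar>
             \<le> C * (emin + exp (- (S\<^sup>2) / 2))"
proof -
  have cont: "\<forall>i<n. \<forall>z. isCont (f i) z"
    using diff by (auto intro: differentiable_imp_continuous_within)
  have "zeros f n = (\<Union>i<n. {z. f i z = 0})" by (auto simp: zeros_def)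
  then have fin: "finite (zeros f n)" using fin_zeros by simp
  define C where "C = (4 * real (card (zeros f n)) + 4) / measure gauss (feas f n)"
  have "C > 0"
    unfolding C_def using measure_gauss_open_pos[OF open_feas[OF cont] zobs] by simp
  moreover have "\<bar>p_selective f n zobs - p_grid f n L emax emin S zobs\<bar> \<le> C * (emin + exp (- (S\<^sup>2) / 2))"
    if "0 < emin" "emin \<le> emax" "1 < S" for emin S
    unfolding C_def using abs_p_selective_p_grid_le[OF Lconst cont zobs fin] that by simp
  ultimately show ?thesis by (intro exI[of _ C] exI[of _ 1] conjI allI impI) auto
qed

end
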